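(* Let $\Delta$ be a local derivation of $\mathcal{S}$ with $\Delta(G_0)=\Delta(G_1)=0$. Then $\Delta(G_m)=0$ for all $m\in\mathbb{Z}$.
   Context: $\mathcal{S}$ is the centerless super Virasoro algebra: the Lie superalgebra over $\mathbb{C}$ with basis $\{L_m,G_n: m,n\in\mathbb{Z}\}$, $L_m$ even, $G_n$ odd, and brackets $[L_m,L_n]=(m-n)L_{m+n}$, $[L_m,G_r]=(\frac m2-r)G_{m+r}$, $[G_r,G_s]=2L_{r+s}$. A homogeneous linear map $D$ of parity $|D|$ is a derivation if $D([x,y])=[D(x),y]+(-1)^{|D||x|}[x,D(y)]$ for homogeneous $x,y$; derivations are sums of even and odd ones. A linear map $\Delta:\mathcal{S}\to\mathcal{S}$ is a local derivation if for every $x$ there is a derivation $D_x$ with $\Delta(x)=D_x(x)$. *)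

theory Defs
  imports Complex_Main "HOL-Library.Poly_Mapping" "HOL-Library.Product_Plus"
begin

text \<open>The centerless super Virasoro algebra S.  An element is a pair (a, b) of finitely
  supported coefficient functions: a is the coefficient vector w.r.t. the even basis
  vectors L_m, b the one w.r.t. the odd basis vectors G_n.\<close>

type_synonym sv = "(int \<Rightarrow>\<^sub>0 complex) \<times> (int \<Rightarrow>\<^sub>0 complex)"

definition Lb :: "int \<Rightarrow> sv" where "Lb m = (Poly_Mapping.single m 1, 0)"
definition Gb :: "int \<Rightarrow> sv" where "Gb n = (0, Poly_Mapping.single n 1)"

definition sv_scale :: "complex \<Rightarrow> sv \<Rightarrow> sv" where
  "sv_scale c x = (Poly_Mapping.map ((*) c) (fst x), Poly_Mapping.map ((*) c) (snd x))"

text \<open>The bracket, extended bilinearly from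
  [L_m,L_n] = (m-n)L_{m+n}, [L_m,G_r] = (m/2-r)G_{m+r}, [G_r,L_m] = -(m/2-r)G_{m+r},
  [G_r,G_s] = 2 L_{r+s}.\<close>
definition sv_bracket :: "sv \<Rightarrow> sv \<Rightarrow> sv" where
  "sv_bracket x y =
    ((\<Sum>m\<in>Poly_Mapping.keys (fst x). \<Sum>n\<in>Poly_Mapping.keys (fst y).
        Poly_Mapping.single (m + n) (Poly_Mapping.lookup (fst x) m * Poly_Mapping.lookup (fst y) n * of_int (m - n)))
     + (\<Sum>r\<in>Poly_Mapping.keys (snd x). \<Sum>s\<in>Poly_Mapping.keys (snd y).
        Poly_Mapping.single (r + s) (2 * Poly_Mapping.lookup (snd x) r * Poly_Mapping.lookup (snd y) s)),
     (\<Sum>m\<in>Poly_Mapping.keys (fst x). \<Sum>r\<in>Poly_Mapping.keys (snd y).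
        Poly_Mapping.single (m + r) (Poly_Mapping.lookup (fst x) m * Poly_Mapping.lookup (snd y) r * (of_int m / 2 - of_int r)))
     - (\<Sum>r\<in>Poly_Mapping.keys (snd x). \<Sum>m\<in>Poly_Mapping.keys (fst y).
        Poly_Mapping.single (m + r) (Poly_Mapping.lookup (snd x) r * Poly_Mapping.lookup (fst y) m * (of_int m / 2 - of_int r))))"

definition sv_linear :: "(sv \<Rightarrow> sv) \<Rightarrow> bool" where
  "sv_linear D \<longleftrightarrow> (\<forall>x y. D (x + y) = D x + D y) \<and> (\<forall>c x. D (sv_scale c x) = sv_scale c (D x))"

definition sv_even :: "sv \<Rightarrow> bool" where "sv_even x \<longleftrightarrow> snd x = 0"
definition sv_odd :: "sv \<Rightarrow> bool" where "sv_odd x \<longleftrightarrow> fst x = 0"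

text \<open>parity of a homogeneous map / element: False = even, True = odd\<close>
definition sv_hom_of_parity :: "bool \<Rightarrow> sv \<Rightarrow> bool" where
  "sv_hom_of_parity p x \<longleftrightarrow> (if p then sv_odd x else sv_even x)"

definition sv_map_of_parity :: "bool \<Rightarrow> (sv \<Rightarrow> sv) \<Rightarrow> bool" where
  "sv_map_of_parity p D \<longleftrightarrow>
     (\<forall>x. sv_even x \<longrightarrow> sv_hom_of_parity p (D x)) \<and>
     (\<forall>x. sv_odd x \<longrightarrow> sv_hom_of_parity (\<not> p) (D x))"

definition sv_hom_derivation :: "bool \<Rightarrow> (sv \<Rightarrow> sv) \<Rightarrow> bool" where
  "sv_hom_derivation p D \<longleftrightarrow> sv_linear D \<and> sv_map_of_parity p D \<and>
     (\<forall>x y. (sv_even x \<or> sv_odd x) \<longrightarrow> (sv_even y \<or> sv_odd y) \<longrightarrow>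
        D (sv_bracket x y) =
          sv_bracket (D x) y
          + sv_scale (if p \<and> sv_odd x then -1 else 1) (sv_bracket x (D y)))"

definition sv_derivation :: "(sv \<Rightarrow> sv) \<Rightarrow> bool" where
  "sv_derivation D \<longleftrightarrow> (\<exists>D0 D1. sv_hom_derivation False D0 \<and> sv_hom_derivation True D1 \<and>
                                 (\<forall>x. D x = D0 x + D1 x))"

definition sv_local_derivation :: "(sv \<Rightarrow> sv) \<Rightarrow> bool" where
  "sv_local_derivation \<Delta> \<longleftrightarrow> sv_linear \<Delta> \<and> (\<forall>x. \<exists>D. sv_derivation D \<and> \<Delta> x = D x)"

end

(* Every derivation of S acts on the odd part as an inner one: an even derivation as
   ad (\<Sum> Y j L_j), an odd one as ad (\<Sum> Y j G_j).  Since \<Delta> kills G_0 and G_1,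
   \<Delta> G_M = \<Delta> (G_M + s G_0 + t G_1) lies in [S, G_M + s G_0 + t G_1] for all s, t.
   For suitable s, t depending on \<zeta>, weights \<zeta>^k resp. \<zeta>^k Q(k) annihilate these brackets,
   so the Laurent polynomials they form with the coefficients of \<Delta> G_M vanish for all \<zeta> \<noteq> 0.
   Hence the L-coefficients vanish, and each G-coefficient is killed by three quadratics
   without common integer root when M \<notin> {0, 1}. *)

theory Submission
  imports Defs "HOL-Computational_Algebra.Polynomial"
begin

section \<open>Brackets of basis elements\<close>

lemma lookup_fst_sv_scale [simp]:
  "Poly_Mapping.lookup (fst (sv_scale c x)) k = c * Poly_Mapping.lookup (fst x) k"
  by (simp add: sv_scale_def Poly_Mapping.map.rep_eq when_def)

lemma lookup_snd_sv_scale [simp]: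
  "Poly_Mapping.lookup (snd (sv_scale c x)) k = c * Poly_Mapping.lookup (snd x) k"
  by (simp add: sv_scale_def Poly_Mapping.map.rep_eq when_def)

lemma sv_scale_one [simp]: "sv_scale 1 x = x"
  by (rule prod_eqI; rule poly_mapping_eqI) simp_all

lemma sv_scale_zero [simp]: "sv_scale c 0 = 0"
  by (rule prod_eqI; rule poly_mapping_eqI) simp_all

lemma fst_Gb [simp]: "fst (Gb r) = 0"
  and snd_Gb [simp]: "snd (Gb r) = Poly_Mapping.single r 1"
  and fst_Lb [simp]: "fst (Lb r) = Poly_Mapping.single r 1"
  and snd_Lb [simp]: "snd (Lb r) = 0"
  by (simp_all add: Gb_def Lb_def)

lemma sv_even_Lb: "sv_even (Lb n)"
  by (simp add: sv_even_def)

lemma sv_odd_Gb: "sv_odd (Gb n)"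
  by (simp add: sv_odd_def)

lemma not_sv_odd_Lb [simp]: "\<not> sv_odd (Lb n)"
  by (simp add: sv_odd_def poly_mapping_eq_iff fun_eq_iff lookup_single)

lemma lookup_sum_single_shift:
  fixes f :: "int \<Rightarrow> complex"
  assumes "finite K" and "\<And>x. x \<notin> K \<Longrightarrow> f x = 0"
  shows "Poly_Mapping.lookup (\<Sum>x\<in>K. Poly_Mapping.single (x + r) (f x)) k = f (k - r)"
    and "Poly_Mapping.lookup (\<Sum>x\<in>K. Poly_Mapping.single (r + x) (f x)) k = f (k - r)"
proof -
  have "Poly_Mapping.lookup (\<Sum>x\<in>K. Poly_Mapping.single (x + r) (f x)) k
      = (\<Sum>x\<in>K. if x = k - r then f x else 0)"
    by (simp add: lookup_sum lookup_single when_def) (rule sum.cong, auto)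
  also have "\<dots> = f (k - r)"
    using assms by (simp add: sum.delta')
  finally show "Poly_Mapping.lookup (\<Sum>x\<in>K. Poly_Mapping.single (x + r) (f x)) k = f (k - r)" .
  then show "Poly_Mapping.lookup (\<Sum>x\<in>K. Poly_Mapping.single (r + x) (f x)) k = f (k - r)"
    by (simp add: add.commute)
qed

lemma lookup_eq_0_if_notin_keys: "x \<notin> Poly_Mapping.keys p \<Longrightarrow> Poly_Mapping.lookup p x = 0"
  by (simp add: in_keys_iff)

lemmas lookup_sv_bracket_simps = sv_bracket_def lookup_sum_single_shift lookup_eq_0_if_notin_keys

lemma lookup_fst_bracket_Gb_right:
  "Poly_Mapping.lookup (fst (sv_bracket a (Gb r))) k = 2 * Poly_Mapping.lookup (snd a) (k - r)"
  by (simp add: lookup_sv_bracket_simps)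

lemma lookup_snd_bracket_Gb_right:
  "Poly_Mapping.lookup (snd (sv_bracket a (Gb r))) k
     = Poly_Mapping.lookup (fst a) (k - r) * (of_int (k - r) / 2 - of_int r)"
  by (simp add: lookup_sv_bracket_simps)

lemma lookup_fst_bracket_Gb_left:
  "Poly_Mapping.lookup (fst (sv_bracket (Gb r) b)) k = 2 * Poly_Mapping.lookup (snd b) (k - r)"
  by (simp add: lookup_sv_bracket_simps)

lemma lookup_snd_bracket_Gb_left:
  "Poly_Mapping.lookup (snd (sv_bracket (Gb r) b)) k
     = - (Poly_Mapping.lookup (fst b) (k - r) * (of_int (k - r) / 2 - of_int r))"
  by (simp add: lookup_sv_bracket_simps)

lemma lookup_fst_bracket_Lb_right:
  "Poly_Mapping.lookup (fst (sv_bracket a (Lb n))) k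
     = Poly_Mapping.lookup (fst a) (k - n) * of_int ((k - n) - n)"
  by (simp add: lookup_sv_bracket_simps)

lemma lookup_fst_bracket_Lb_left:
  "Poly_Mapping.lookup (fst (sv_bracket (Lb n) b)) k
     = Poly_Mapping.lookup (fst b) (k - n) * of_int (n - (k - n))"
  by (simp add: lookup_sv_bracket_simps)

lemma lookup_snd_bracket_Lb_left:
  "Poly_Mapping.lookup (snd (sv_bracket (Lb n) b)) k
     = Poly_Mapping.lookup (snd b) (k - n) * (of_int n / 2 - of_int (k - n))"
  by (simp add: lookup_sv_bracket_simps)

lemma sv_bracket_Gb_Gb: "sv_bracket (Gb r) (Gb s) = sv_scale 2 (Lb (r + s))"
  by (rule prod_eqI; rule poly_mapping_eqI)
     (auto simp: lookup_fst_bracket_Gb_right lookup_snd_bracket_Gb_right lookup_single when_def)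

lemma sv_bracket_Lb_Gb: "sv_bracket (Lb m) (Gb r) = sv_scale (of_int m / 2 - of_int r) (Gb (m + r))"
  by (rule prod_eqI; rule poly_mapping_eqI)
     (auto simp: lookup_fst_bracket_Gb_right lookup_snd_bracket_Gb_right lookup_single when_def)

lemma sv_bracket_Lb_Lb: "sv_bracket (Lb m) (Lb n) = sv_scale (of_int (m - n)) (Lb (m + n))"
  by (rule prod_eqI; rule poly_mapping_eqI)
     (auto simp: lookup_fst_bracket_Lb_left lookup_snd_bracket_Lb_left lookup_single when_def)

section \<open>Derivations restricted to the odd part\<close>

lemma sv_linear_add: "sv_linear f \<Longrightarrow> f (x + y) = f x + f y"
  and sv_linear_scale: "sv_linear f \<Longrightarrow> f (sv_scale c x) = sv_scale c (f x)"
  unfolding sv_linear_def by blast+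

lemma sv_hom_derivation_linear: "sv_hom_derivation p D \<Longrightarrow> sv_linear D"
  by (simp add: sv_hom_derivation_def)

lemma sv_hom_derivation_bracket:
  assumes "sv_hom_derivation p D" and "sv_even x \<or> sv_odd x" and "sv_even y \<or> sv_odd y"
  shows "D (sv_bracket x y) =
           sv_bracket (D x) y + sv_scale (if p \<and> sv_odd x then -1 else 1) (sv_bracket x (D y))"
  using assms unfolding sv_hom_derivation_def by blast

lemma sv_hom_derivation_Gb_parity:
  "sv_hom_derivation p D \<Longrightarrow> sv_hom_of_parity (\<not> p) (D (Gb r))"
  using sv_odd_Gb unfolding sv_hom_derivation_def sv_map_of_parity_def by blast

lemma even_derivation_fst_Gb: "sv_hom_derivation False D \<Longrightarrow> fst (D (Gb r)) = 0"
  using sv_hom_derivation_Gb_parity[of False D r] by (simp add: sv_hom_of_parity_def sv_odd_def)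

lemma odd_derivation_snd_Gb: "sv_hom_derivation True D \<Longrightarrow> snd (D (Gb r)) = 0"
  using sv_hom_derivation_Gb_parity[of True D r] by (simp add: sv_hom_of_parity_def sv_even_def)

lemma additive_int_fun_eq_mult:
  fixes f :: "int \<Rightarrow> 'a::ring_1"
  assumes add: "\<And>r s. f (r + s) = f r + f s"
  shows "f r = of_int r * f 1"
proof (induction r rule: int_induct[where k = 0])
  case base
  show ?case using add[of 0 0] by simp
next
  case (step1 i)
  then show ?case using add[of i 1] by (simp add: algebra_simps)
next
  case (step2 i)
  then show ?case using add[of "i - 1" 1] by (simp add: algebra_simps)
qed

text \<open>An even derivation acts on the \<open>G\<^sub>r\<close> as \<open>ad (\<Sum>\<^sub>j Y j L\<^sub>j)\<close>.\<close>

lemma even_derivation_on_Gb: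
  assumes D: "sv_hom_derivation False D"
  obtains Y :: "int \<Rightarrow> complex" where "finite {j. Y j \<noteq> 0}"
    and "\<And>r k. Poly_Mapping.lookup (snd (D (Gb r))) k = Y (k - r) * (of_int (k - r) / 2 - of_int r)"
proof -
  have Leibniz: "D (sv_bracket x y) = sv_bracket (D x) y + sv_bracket x (D y)"
    if "sv_even x \<or> sv_odd x" "sv_even y \<or> sv_odd y" for x y
    using sv_hom_derivation_bracket[OF D that] by simp
  note scale = sv_linear_scale[OF sv_hom_derivation_linear[OF D]]
  define h where "h = fst (D (Lb 0))"
  define \<alpha> where "\<alpha> n = Poly_Mapping.lookup (fst (D (Lb n))) n" for n
  define \<beta> where "\<beta> r = Poly_Mapping.lookup (snd (D (Gb r))) r" for r
  have off_diagonal: "of_int (k - r) * Poly_Mapping.lookup (snd (D (Gb r))) k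
      = Poly_Mapping.lookup h (k - r) * (of_int (k - r) / 2 - of_int r)" for r k
    using arg_cong[OF Leibniz[of "Lb 0" "Gb r"], of "\<lambda>z. Poly_Mapping.lookup (snd z) k"]
    by (simp add: sv_even_Lb sv_odd_Gb sv_bracket_Lb_Gb scale lookup_add h_def
        lookup_snd_bracket_Gb_right lookup_snd_bracket_Lb_left algebra_simps)
  have \<alpha>_\<beta>: "\<alpha> (r + s) = \<beta> r + \<beta> s" for r s
  proof -
    have "2 * \<alpha> (r + s) = 2 * (\<beta> r + \<beta> s)"
      using arg_cong[OF Leibniz[of "Gb r" "Gb s"], of "\<lambda>z. Poly_Mapping.lookup (fst z) (r + s)"]
      by (simp add: sv_odd_Gb sv_bracket_Gb_Gb scale lookup_add \<alpha>_def \<beta>_def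
          lookup_fst_bracket_Gb_right lookup_fst_bracket_Gb_left distrib_left)
    then show ?thesis by (subst (asm) mult_left_cancel) simp_all
  qed
  have \<alpha>_0: "\<alpha> 0 = \<alpha> 1 + \<alpha> (-1)"
  proof -
    have "2 * \<alpha> 0 = 2 * (\<alpha> 1 + \<alpha> (-1))"
      using arg_cong[OF Leibniz[of "Lb 1" "Lb (-1)"], of "\<lambda>z. Poly_Mapping.lookup (fst z) 0"]
      by (simp add: sv_even_Lb sv_bracket_Lb_Lb scale lookup_add \<alpha>_def
          lookup_fst_bracket_Lb_right lookup_fst_bracket_Lb_left distrib_left mult.commute)
    then show ?thesis by (subst (asm) mult_left_cancel) simp_all
  qed
  have "\<beta> 0 = 0"
    using \<alpha>_0 \<alpha>_\<beta>[of 0 0] \<alpha>_\<beta>[of 1 0] \<alpha>_\<beta>[of "-1" 0] \<alpha>_\<beta>[of 1 "-1"] by simp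
  then have "\<beta> (r + s) = \<beta> r + \<beta> s" for r s
    using \<alpha>_\<beta>[of r s] \<alpha>_\<beta>[of "r + s" 0] by simp
  then have diagonal: "\<beta> r = of_int r * \<beta> 1" for r
    by (rule additive_int_fun_eq_mult)
  define Y where "Y j = (if j = 0 then - \<beta> 1 else Poly_Mapping.lookup h j / of_int j)" for j
  show thesis
  proof
    show "finite {j. Y j \<noteq> 0}"
      by (rule finite_subset[of _ "insert 0 (Poly_Mapping.keys h)"]) (auto simp: Y_def in_keys_iff)
    show "Poly_Mapping.lookup (snd (D (Gb r))) k = Y (k - r) * (of_int (k - r) / 2 - of_int r)" for r k
    proof (cases "k = r")
      case True
      then show ?thesis using diagonal[of r] by (simp add: Y_def \<beta>_def)
    next
      case False
      then have "of_int (k - r) \<noteq> (0 :: complex)" by simp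
      with off_diagonal[of k r] False show ?thesis by (simp add: Y_def field_simps)
    qed
  qed
qed

text \<open>Here \<open>\<gamma> n\<close> and \<open>\<delta> r\<close> are the diagonal coefficients of \<open>D L\<^sub>n\<close> and \<open>D G\<^sub>r\<close> for an odd
  derivation \<open>D\<close>; the hypotheses are \<open>[G\<^sub>r, G\<^sub>s] = 2 L\<^sub>r\<^sub>+\<^sub>s\<close> and
  \<open>[L\<^sub>m, G\<^sub>r] = (m/2 - r) G\<^sub>m\<^sub>+\<^sub>r\<close> read off on the diagonal.\<close>

lemma odd_diagonal_coeffs_const:
  fixes \<gamma> \<delta> :: "int \<Rightarrow> complex"
  assumes GG: "\<And>r s. 2 * \<gamma> (r + s) = \<delta> r * (of_int r / 2 - of_int s) + \<delta> s * (of_int s / 2 - of_int r)"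
    and LG: "\<And>m r. (of_int m / 2 - of_int r) * \<delta> (m + r) = 2 * \<gamma> m + \<delta> r * of_int (m - r)"
  shows "\<delta> r = \<delta> 0"
proof -
  have "\<delta> (-1) = \<delta> 1"
    using GG[of 1 "-1"] GG[of 0 0] by simp
  then have "4 * \<gamma> (-1) = 2 * \<delta> 0 - \<delta> 1"
    using GG[of "-1" 0] by (simp add: field_simps)
  moreover have "\<delta> 2 = 2 * \<delta> 0 - \<delta> 1"
    using LG[of 1 1] GG[of 1 0] by (simp add: field_simps) algebra
  moreover have "6 * \<delta> 2 = 5 * \<delta> 1 + 4 * \<gamma> (-1)"
    using LG[of "-1" 2] by (simp add: field_simps)
  ultimately have "10 * (\<delta> 1 - \<delta> 0) = 0"
    by algebra
  then have "\<delta> 1 = \<delta> 0"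
    by simp
  then have "4 * \<gamma> 1 = - \<delta> 0"
    using GG[of 1 0] by (simp add: field_simps)
  then have recurrence: "(1 - 2 * of_int r) * \<delta> (r + 1) = 2 * (1 - of_int r) * \<delta> r - \<delta> 0" for r
    using LG[of 1 r] by (simp add: add.commute field_simps)
  show ?thesis
  proof (induction r rule: int_induct[where k = 0])
    case base
    show ?case by simp
  next
    case (step1 i)
    have "of_int (1 - 2 * i) \<noteq> (0 :: complex)"
      unfolding of_int_eq_0_iff by presburger
    then have "(1 - 2 * of_int i :: complex) \<noteq> 0"
      by simp
    moreover have "(1 - 2 * of_int i) * \<delta> (i + 1) = (1 - 2 * of_int i) * \<delta> 0"
      using recurrence[of i] step1(2) by algebra
    ultimately show ?case by simp
  next
    case (step2 i)
    have "of_int (2 * (2 - i)) \<noteq> (0 :: complex)"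
      unfolding of_int_eq_0_iff using step2(1) by simp
    then have "(2 * (2 - of_int i) :: complex) \<noteq> 0"
      by simp
    moreover have "(1 - 2 * (of_int i - 1)) * \<delta> i = 2 * (1 - (of_int i - 1)) * \<delta> (i - 1) - \<delta> 0"
      using recurrence[of "i - 1"] by simp
    then have "(2 * (2 - of_int i)) * \<delta> (i - 1) = (2 * (2 - of_int i)) * \<delta> 0"
      using step2(2) by algebra
    ultimately show ?case by simp
  qed
qed

text \<open>An odd derivation acts on the \<open>G\<^sub>r\<close> as \<open>ad (\<Sum>\<^sub>j Y j G\<^sub>j)\<close>.\<close>

lemma odd_derivation_on_Gb:
  assumes D: "sv_hom_derivation True D"
  obtains Y :: "int \<Rightarrow> complex" where "finite {j. Y j \<noteq> 0}"
    and "\<And>r k. Poly_Mapping.lookup (fst (D (Gb r))) k = 2 * Y (k - r)"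
proof -
  have Leibniz_Lb: "D (sv_bracket (Lb m) (Gb r)) = sv_bracket (D (Lb m)) (Gb r) + sv_bracket (Lb m) (D (Gb r))" for m r
    using sv_hom_derivation_bracket[OF D, of "Lb m" "Gb r"] by (simp add: sv_even_Lb sv_odd_Gb)
  have Leibniz_Gb: "D (sv_bracket (Gb r) (Gb s))
      = sv_bracket (D (Gb r)) (Gb s) + sv_scale (-1) (sv_bracket (Gb r) (D (Gb s)))" for r s
    using sv_hom_derivation_bracket[OF D, of "Gb r" "Gb s"] by (simp add: sv_odd_Gb)
  note scale = sv_linear_scale[OF sv_hom_derivation_linear[OF D]]
  define h where "h = snd (D (Lb 0))"
  define \<gamma> where "\<gamma> n = Poly_Mapping.lookup (snd (D (Lb n))) n" for n
  define \<delta> where "\<delta> r = Poly_Mapping.lookup (fst (D (Gb r))) r" for r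
  have off_diagonal: "of_int (k - r) * Poly_Mapping.lookup (fst (D (Gb r))) k = 2 * Poly_Mapping.lookup h (k - r)" for r k
    using arg_cong[OF Leibniz_Lb[of 0 r], of "\<lambda>z. Poly_Mapping.lookup (fst z) k"]
    by (simp add: sv_bracket_Lb_Gb scale lookup_add h_def
        lookup_fst_bracket_Gb_right lookup_fst_bracket_Lb_left algebra_simps)
  have GG: "2 * \<gamma> (r + s) = \<delta> r * (of_int r / 2 - of_int s) + \<delta> s * (of_int s / 2 - of_int r)" for r s
    using arg_cong[OF Leibniz_Gb[of r s], of "\<lambda>z. Poly_Mapping.lookup (snd z) (r + s)"]
    by (simp add: sv_bracket_Gb_Gb scale lookup_add \<gamma>_def \<delta>_def
        lookup_snd_bracket_Gb_right lookup_snd_bracket_Gb_left)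
  have LG: "(of_int m / 2 - of_int r) * \<delta> (m + r) = 2 * \<gamma> m + \<delta> r * of_int (m - r)" for m r
    using arg_cong[OF Leibniz_Lb[of m r], of "\<lambda>z. Poly_Mapping.lookup (fst z) (m + r)"]
    by (simp add: sv_bracket_Lb_Gb scale lookup_add \<gamma>_def \<delta>_def
        lookup_fst_bracket_Gb_right lookup_fst_bracket_Lb_left)
  have diagonal: "\<delta> r = \<delta> 0" for r
    using GG LG by (rule odd_diagonal_coeffs_const)
  define Y where "Y j = (if j = 0 then \<delta> 0 / 2 else Poly_Mapping.lookup h j / of_int j)" for j
  show thesis
  proof
    show "finite {j. Y j \<noteq> 0}"
      by (rule finite_subset[of _ "insert 0 (Poly_Mapping.keys h)"]) (auto simp: Y_def in_keys_iff)
    show "Poly_Mapping.lookup (fst (D (Gb r))) k = 2 * Y (k - r)" for r k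
    proof (cases "k = r")
      case True
      then show ?thesis using diagonal[of r] by (simp add: Y_def \<delta>_def)
    next
      case False
      then have "of_int (k - r) \<noteq> (0 :: complex)" by simp
      with off_diagonal[of k r] False show ?thesis by (simp add: Y_def field_simps)
    qed
  qed
qed

section \<open>Laurent polynomials\<close>

lemma Laurent_sum_eq_0_imp_coeff_eq_0:
  fixes f :: "int \<Rightarrow> complex"
  assumes S: "finite S" and outside: "\<And>k. k \<notin> S \<Longrightarrow> f k = 0"
    and vanish: "\<And>\<zeta>. \<zeta> \<noteq> 0 \<Longrightarrow> (\<Sum>k\<in>S. f k * \<zeta> powi k) = 0"
  shows "f j = 0"
proof (cases "j \<in> S")
  case False
  then show ?thesis by (rule outside)
next
  case True
  define N where "N = (\<Sum>k\<in>S. nat \<bar>k\<bar>)"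
  have nonneg: "0 \<le> k + int N" if "k \<in> S" for k
    using member_le_sum[OF that, of "\<lambda>k. nat \<bar>k\<bar>"] S unfolding N_def by linarith
  define p where "p = (\<Sum>k\<in>S. monom (f k) (nat (k + int N)))"
  have "poly p \<zeta> = 0" if "\<zeta> \<noteq> 0" for \<zeta>
  proof -
    have "poly p \<zeta> = (\<Sum>k\<in>S. \<zeta> ^ N * (f k * \<zeta> powi k))"
    proof (unfold p_def poly_sum poly_monom, rule sum.cong[OF refl])
      fix k assume "k \<in> S"
      then have "\<zeta> ^ nat (k + int N) = \<zeta> powi (k + int N)"
        using nonneg by (simp add: power_int_def)
      also have "\<dots> = \<zeta> powi k * \<zeta> ^ N"
        using \<open>\<zeta> \<noteq> 0\<close> by (simp add: power_int_add)
      finally show "f k * \<zeta> ^ nat (k + int N) = \<zeta> ^ N * (f k * \<zeta> powi k)"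
        by simp
    qed
    also have "\<dots> = 0"
      using vanish[OF that] by (simp flip: sum_distrib_left)
    finally show ?thesis .
  qed
  then have "UNIV - {0} \<subseteq> {\<zeta>. poly p \<zeta> = 0}"
    by blast
  moreover have "infinite (UNIV - {0 :: complex})"
    by (simp add: infinite_UNIV_char_0)
  ultimately have "p = 0"
    using poly_roots_finite finite_subset by blast
  have "coeff p (nat (j + int N)) = (\<Sum>k\<in>S. if k = j then f k else 0)"
  proof (unfold p_def coeff_sum coeff_monom, rule sum.cong[OF refl])
    fix k assume "k \<in> S"
    then have "nat (k + int N) = nat (j + int N) \<longleftrightarrow> k = j"
      using nonneg True by (simp add: nat_eq_iff)
    then show "(if nat (k + int N) = nat (j + int N) then f k else 0) = (if k = j then f k else 0)"
      by simp
  qed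
  also have "\<dots> = f j"
    using True S by simp
  finally show ?thesis
    using \<open>p = 0\<close> by simp
qed

lemma Sum_any_shift: "Sum_any f = Sum_any (\<lambda>n. f (n + d))"
  for f :: "int \<Rightarrow> 'a::comm_monoid_add"
  by (rule Sum_any.reindex_cong[OF bij_plus_right]) (simp add: comp_def)

lemma Sum_any_linear_combination:
  fixes f g h :: "'b \<Rightarrow> 'a::comm_semiring_0"
  assumes "finite {k. f k \<noteq> 0}" and "finite {k. g k \<noteq> 0}" and "finite {k. h k \<noteq> 0}"
  shows "Sum_any (\<lambda>k. f k + s * g k + t * h k) = Sum_any f + s * Sum_any g + t * Sum_any h"
proof -
  have fin_scaled: "finite {k. c * u k \<noteq> 0}" if "finite {k. u k \<noteq> 0}" for c and u :: "'b \<Rightarrow> 'a"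
    by (rule finite_subset[OF _ that]) auto
  have fin_sum: "finite {k. u k + v k \<noteq> 0}"
    if "finite {k. u k \<noteq> 0}" and "finite {k. v k \<noteq> 0}" for u v :: "'b \<Rightarrow> 'a"
    by (rule finite_subset[OF _ finite_UnI[OF that]]) auto
  note fin = assms fin_scaled[OF assms(2), of s] fin_scaled[OF assms(3), of t]
  have "Sum_any (\<lambda>k. f k + s * g k + t * h k) = Sum_any (\<lambda>k. f k + s * g k) + Sum_any (\<lambda>k. t * h k)"
    using fin by (intro Sum_any.distrib fin_sum)
  also have "\<dots> = Sum_any f + Sum_any (\<lambda>k. s * g k) + Sum_any (\<lambda>k. t * h k)"
    using fin by (simp add: Sum_any.distrib)
  finally show ?thesis
    using assms by (simp add: Sum_any_right_distrib)
qed

lemma Sum_any_shifted_combination: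
  fixes A a b c :: "int \<Rightarrow> complex"
  assumes fin: "finite {n. A n \<noteq> 0}"
  shows "Sum_any (\<lambda>k. A (k - M) * a k + s * (A k * b k) + t * (A (k - 1) * c k))
       = Sum_any (\<lambda>n. A n * (a (n + M) + s * b n + t * c (n + 1)))"
proof -
  have fin_shift: "finite {k. A (k - d) * g k \<noteq> 0}" for d and g :: "int \<Rightarrow> complex"
    by (rule finite_subset[of _ "(\<lambda>n. n + d) ` {n. A n \<noteq> 0}"])
       (auto simp: fin intro!: image_eqI[where x = "_ - d"])
  have "Sum_any (\<lambda>k. A (k - M) * a k + s * (A k * b k) + t * (A (k - 1) * c k))
      = Sum_any (\<lambda>k. A (k - M) * a k) + s * Sum_any (\<lambda>k. A k * b k) + t * Sum_any (\<lambda>k. A (k - 1) * c k)"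
    using fin_shift[of M a] fin_shift[of 0 b] fin_shift[of 1 c]
    by (intro Sum_any_linear_combination) simp_all
  also have "\<dots> = Sum_any (\<lambda>n. A n * a (n + M)) + s * Sum_any (\<lambda>n. A n * b n) + t * Sum_any (\<lambda>n. A n * c (n + 1))"
    using Sum_any_shift[of "\<lambda>k. A (k - M) * a k" M] Sum_any_shift[of "\<lambda>k. A (k - 1) * c k" 1] by simp
  also have "\<dots> = Sum_any (\<lambda>n. A n * a (n + M) + s * (A n * b n) + t * (A n * c (n + 1)))"
    using fin_shift[of 0 "\<lambda>n. a (n + M)"] fin_shift[of 0 b] fin_shift[of 0 "\<lambda>n. c (n + 1)"]
    by (intro Sum_any_linear_combination[symmetric]) simp_all
  finally show ?thesis
    by (simp add: algebra_simps)
qed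

section \<open>The local derivation on the odd basis vectors\<close>

lemma local_derivation_Gb_coeffs:
  assumes loc: "sv_local_derivation \<Delta>" and h0: "\<Delta> (Gb 0) = 0" and h1: "\<Delta> (Gb 1) = 0"
  obtains Y1 Y2 :: "int \<Rightarrow> complex"
  where "finite {j. Y1 j \<noteq> 0}" and "finite {j. Y2 j \<noteq> 0}"
    and "\<And>k. Poly_Mapping.lookup (snd (\<Delta> (Gb M))) k =
          Y1 (k - M) * (of_int (k - M) / 2 - of_int M) + s * (Y1 k * (of_int k / 2))
          + t * (Y1 (k - 1) * (of_int (k - 1) / 2 - 1))"
    and "\<And>k. Poly_Mapping.lookup (fst (\<Delta> (Gb M))) k =
          2 * Y2 (k - M) + s * (2 * Y2 k) + t * (2 * Y2 (k - 1))"
proof -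
  define x where "x = Gb M + sv_scale s (Gb 0) + sv_scale t (Gb 1)"
  have expand: "f x = f (Gb M) + sv_scale s (f (Gb 0)) + sv_scale t (f (Gb 1))" if "sv_linear f" for f
    using that by (simp add: x_def sv_linear_add sv_linear_scale)
  obtain D where "sv_derivation D" and "\<Delta> x = D x"
    using loc unfolding sv_local_derivation_def by blast
  moreover obtain D0 D1 where D0: "sv_hom_derivation False D0" and D1: "sv_hom_derivation True D1"
    and "\<And>y. D y = D0 y + D1 y"
    using \<open>sv_derivation D\<close> unfolding sv_derivation_def by blast
  moreover have "\<Delta> x = \<Delta> (Gb M)"
    using expand[of \<Delta>] loc h0 h1 by (simp add: sv_local_derivation_def)
  ultimately have \<Delta>_Gb: "\<Delta> (Gb M) = D0 x + D1 x"
    by simp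
  obtain Y1 where "finite {j. Y1 j \<noteq> 0}"
    and Y1: "\<And>r k. Poly_Mapping.lookup (snd (D0 (Gb r))) k = Y1 (k - r) * (of_int (k - r) / 2 - of_int r)"
    using even_derivation_on_Gb[OF D0] by blast
  obtain Y2 where "finite {j. Y2 j \<noteq> 0}"
    and Y2: "\<And>r k. Poly_Mapping.lookup (fst (D1 (Gb r))) k = 2 * Y2 (k - r)"
    using odd_derivation_on_Gb[OF D1] by blast
  note expand_D = expand[OF sv_hom_derivation_linear[OF D0]] expand[OF sv_hom_derivation_linear[OF D1]]
  show thesis
  proof
    show "finite {j. Y1 j \<noteq> 0}" "finite {j. Y2 j \<noteq> 0}" by fact+
    show "Poly_Mapping.lookup (snd (\<Delta> (Gb M))) k =
          Y1 (k - M) * (of_int (k - M) / 2 - of_int M) + s * (Y1 k * (of_int k / 2))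
          + t * (Y1 (k - 1) * (of_int (k - 1) / 2 - 1))" for k
      by (simp add: \<Delta>_Gb expand_D lookup_add Y1 odd_derivation_snd_Gb[OF D1])
    show "Poly_Mapping.lookup (fst (\<Delta> (Gb M))) k =
          2 * Y2 (k - M) + s * (2 * Y2 k) + t * (2 * Y2 (k - 1))" for k
      by (simp add: \<Delta>_Gb expand_D lookup_add Y2 even_derivation_fst_Gb[OF D0])
  qed
qed

lemma fst_local_derivation_Gb_eq_0:
  assumes "sv_local_derivation \<Delta>" and "\<Delta> (Gb 0) = 0" and "\<Delta> (Gb 1) = 0"
  shows "fst (\<Delta> (Gb M)) = 0"
proof (rule poly_mapping_eqI)
  fix j
  define S where "S = Poly_Mapping.keys (fst (\<Delta> (Gb M)))"
  define W where "W k = Poly_Mapping.lookup (fst (\<Delta> (Gb M))) k" for k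
  have vanish: "(\<Sum>k\<in>S. W k * \<zeta> powi k) = 0" if "\<zeta> \<noteq> 0" for \<zeta>
  proof -
    text \<open>With \<open>s = -\<zeta>\<^sup>M\<close> and \<open>t = 0\<close> the weights \<open>\<zeta>\<^sup>k\<close> annihilate every \<open>[G\<^sub>n, G\<^sub>M + s G\<^sub>0]\<close>.\<close>
    obtain Y1 Y2 where "finite {j. Y1 j \<noteq> 0}" and fin: "finite {j. Y2 j \<noteq> 0}"
      and "\<And>k. Poly_Mapping.lookup (snd (\<Delta> (Gb M))) k =
          Y1 (k - M) * (of_int (k - M) / 2 - of_int M) + (- (\<zeta> powi M)) * (Y1 k * (of_int k / 2))
          + 0 * (Y1 (k - 1) * (of_int (k - 1) / 2 - 1))"
      and W: "\<And>k. Poly_Mapping.lookup (fst (\<Delta> (Gb M))) k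
          = 2 * Y2 (k - M) + (- (\<zeta> powi M)) * (2 * Y2 k) + 0 * (2 * Y2 (k - 1))"
      by (rule local_derivation_Gb_coeffs[OF assms, where M = M and s = "- (\<zeta> powi M)" and t = 0])
        (rule that)
    have "(\<Sum>k\<in>S. W k * \<zeta> powi k) = Sum_any (\<lambda>k. W k * \<zeta> powi k)"
      by (rule Sum_any.expand_superset[symmetric]) (auto simp: S_def W_def in_keys_iff)
    also have "\<dots> = Sum_any (\<lambda>k. Y2 (k - M) * (2 * \<zeta> powi k) + (- (\<zeta> powi M)) * (Y2 k * (2 * \<zeta> powi k))
        + 0 * (Y2 (k - 1) * (2 * \<zeta> powi k)))"
      unfolding W_def W by (simp only: distrib_right mult.assoc mult.left_commute[of 2])
    also have "\<dots> = Sum_any (\<lambda>n. Y2 n * (2 * \<zeta> powi (n + M) + (- (\<zeta> powi M)) * (2 * \<zeta> powi n)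
        + 0 * (2 * \<zeta> powi (n + 1))))"
      by (rule Sum_any_shifted_combination[OF fin])
    also have "\<dots> = 0"
    proof -
      have "2 * \<zeta> powi (n + M) + (- (\<zeta> powi M)) * (2 * \<zeta> powi n) + 0 * (2 * \<zeta> powi (n + 1)) = 0" for n
        using that by (simp add: power_int_add)
      then show ?thesis
        by simp
    qed
    finally show ?thesis .
  qed
  have "finite S"
    by (simp add: S_def)
  moreover have "W k = 0" if "k \<notin> S" for k
    using that by (simp add: S_def W_def in_keys_iff)
  ultimately have "W j = 0"
    using vanish by (rule Laurent_sum_eq_0_imp_coeff_eq_0)
  then show "Poly_Mapping.lookup (fst (\<Delta> (Gb M))) j = Poly_Mapping.lookup 0 j"
    by (simp add: W_def)
qed

text \<open>The weights \<open>\<zeta>\<^sup>k annihilating_weight M (\<zeta>\<^sup>M) T k\<close> annihilate every bracket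
  \<open>[L\<^sub>n, G\<^sub>M - (\<zeta>\<^sup>M + T) G\<^sub>0 + (T/\<zeta>) G\<^sub>1]\<close>; as a polynomial in \<open>T\<close> they carry the three
  quadratics \<open>q2\<close>, \<open>q1 M\<close>, \<open>q0 M\<close>, which have no common integer root unless \<open>M \<in> {0, 1}\<close>.\<close>

definition q2 :: "'a::comm_ring_1 \<Rightarrow> 'a" where
  "q2 x = x^2 - 3 * x + 2"

definition q1 :: "'a::comm_ring_1 \<Rightarrow> 'a \<Rightarrow> 'a" where
  "q1 M x = 2 * x^2 - 3 * (1 + M) * x + 6 * M - M^2 - 1"

definition q0 :: "'a::comm_ring_1 \<Rightarrow> 'a \<Rightarrow> 'a" where
  "q0 M x = x^2 - 3 * M * x + 2 * M^2"

definition annihilating_weight :: "complex \<Rightarrow> complex \<Rightarrow> complex \<Rightarrow> complex \<Rightarrow> complex" where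
  "annihilating_weight M Z T x = T^2 * q2 x + T * (M * Z) * q1 M x + (M * Z)^2 * q0 M x"

lemma annihilating_weight_recurrence:
  fixes n M Z T :: complex
  shows "Z * (n / 2 - M) * annihilating_weight M Z T (n + M) - (Z + T) * (n / 2) * annihilating_weight M Z T n
           + T * (n / 2 - 1) * annihilating_weight M Z T (n + 1) = 0"
proof -
  have "2 * (Z * (n / 2 - M) * annihilating_weight M Z T (n + M) - (Z + T) * (n / 2) * annihilating_weight M Z T n
           + T * (n / 2 - 1) * annihilating_weight M Z T (n + 1))
      = Z * (n - 2 * M) * annihilating_weight M Z T (n + M) - (Z + T) * n * annihilating_weight M Z T n
           + T * (n - 2) * annihilating_weight M Z T (n + 1)"
    by (simp add: field_simps)
  also have "\<dots> = 0"
    unfolding annihilating_weight_def q2_def q1_def q0_def by (simp add: algebra_simps power2_eq_square)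
  finally show ?thesis
    by (simp only: mult_eq_0_iff) simp
qed

lemma annihilating_weight_of_int:
  "annihilating_weight (of_int M) Z T (of_int k)
     = T^2 * of_int (q2 k) + T * (of_int M * Z) * of_int (q1 M k) + (of_int M * Z)^2 * of_int (q0 M k)"
  by (simp add: annihilating_weight_def q2_def q1_def q0_def)

lemma q2_q1_q0_no_common_int_root:
  fixes M k :: int
  assumes "M \<noteq> 1" and "q2 k = 0" and "q1 M k = 0" and "q0 M k = 0"
  shows False
proof -
  have "(k - 1) * (k - 2) = 0"
    using assms(2) by (simp add: q2_def algebra_simps power2_eq_square)
  then consider "k = 1" | "k = 2"
    by auto
  then show False
  proof cases
    case 1
    then have "(M - 1) * (M - 2) = 0" and "(2 * M - 1) * (M - 1) = 0"
      using assms(3,4) by (simp_all add: q1_def q0_def algebra_simps power2_eq_square)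
    then show False
      using assms(1) by auto
  next
    case 2
    then have "(M - 1) * (M - 2) = 0" and "(1 - M) * (1 + M) = 0"
      using assms(3,4) by (simp_all add: q1_def q0_def algebra_simps power2_eq_square)
    then show False
      using assms(1) by auto
  qed
qed

lemma snd_local_derivation_Gb_annihilated:
  assumes "sv_local_derivation \<Delta>" and "\<Delta> (Gb 0) = 0" and "\<Delta> (Gb 1) = 0" and "\<zeta> \<noteq> 0"
  shows "Sum_any (\<lambda>k. Poly_Mapping.lookup (snd (\<Delta> (Gb M))) k
           * (\<zeta> powi k * annihilating_weight (of_int M) (\<zeta> powi M) T (of_int k))) = 0"
proof -
  define Z where "Z = \<zeta> powi M"
  define e where "e k = \<zeta> powi k * annihilating_weight (of_int M) Z T (of_int k)" for k
  obtain Y Y' where fin: "finite {j. Y j \<noteq> 0}" and "finite {j. Y' j \<noteq> 0}"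
    and V: "\<And>k. Poly_Mapping.lookup (snd (\<Delta> (Gb M))) k =
          Y (k - M) * (of_int (k - M) / 2 - of_int M) + (- Z - T) * (Y k * (of_int k / 2))
          + T / \<zeta> * (Y (k - 1) * (of_int (k - 1) / 2 - 1))"
    and "\<And>k. Poly_Mapping.lookup (fst (\<Delta> (Gb M))) k =
          2 * Y' (k - M) + (- Z - T) * (2 * Y' k) + T / \<zeta> * (2 * Y' (k - 1))"
    by (rule local_derivation_Gb_coeffs[OF assms(1-3), where M = M and s = "- Z - T" and t = "T / \<zeta>"])
      (rule that)
  define a where "a k = (of_int (k - M) / 2 - of_int M) * e k" for k
  define b where "b k = of_int k / 2 * e k" for k
  define c where "c k = (of_int (k - 1) / 2 - 1) * e k" for k
  have "Sum_any (\<lambda>k. Poly_Mapping.lookup (snd (\<Delta> (Gb M))) k * e k)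
      = Sum_any (\<lambda>k. Y (k - M) * a k + (- Z - T) * (Y k * b k) + T / \<zeta> * (Y (k - 1) * c k))"
    unfolding V a_def b_def c_def by (simp only: distrib_right mult.assoc)
  also have "\<dots> = Sum_any (\<lambda>n. Y n * (a (n + M) + (- Z - T) * b n + T / \<zeta> * c (n + 1)))"
    by (rule Sum_any_shifted_combination[OF fin])
  also have "\<dots> = 0"
  proof -
    let ?W = "annihilating_weight (of_int M) Z T"
    have "a (n + M) + (- Z - T) * b n + T / \<zeta> * c (n + 1) = 0" for n
    proof -
      define x where "x = (of_int n / 2 :: complex)"
      define u where "u = T / \<zeta>"
      have a_shift: "a (n + M) = (x - of_int M) * (\<zeta> powi n * (Z * ?W (of_int n + of_int M)))"
        using assms(4) by (simp add: a_def e_def x_def Z_def power_int_add mult_ac)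
      have b_n: "b n = x * (\<zeta> powi n * ?W (of_int n))"
        by (simp add: b_def e_def x_def)
      have c_shift: "c (n + 1) = (x - 1) * (\<zeta> powi n * (\<zeta> * ?W (of_int n + 1)))"
        using assms(4) by (simp add: c_def e_def x_def power_int_add mult_ac)
      have "a (n + M) + (- Z - T) * b n + T / \<zeta> * c (n + 1)
          = \<zeta> powi n * (Z * (x - of_int M) * ?W (of_int n + of_int M) - (Z + T) * x * ?W (of_int n)
              + (u * \<zeta>) * (x - 1) * ?W (of_int n + 1))"
        unfolding a_shift b_n c_shift u_def[symmetric] by (simp add: algebra_simps)
      also have "u * \<zeta> = T"
        using assms(4) by (simp add: u_def)
      finally show ?thesis
        unfolding x_def by (simp only: annihilating_weight_recurrence mult_zero_right)
    qed
    then show ?thesis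
      by simp
  qed
  finally show ?thesis
    by (simp only: e_def Z_def)
qed

lemma quadratic_eq_0_imp_coeffs_eq_0:
  fixes a b c :: "'a::field_char_0"
  assumes "\<And>T. T^2 * a + T * b + c = 0"
  shows "a = 0" and "b = 0" and "c = 0"
proof -
  show "c = 0"
    using assms[of 0] by simp
  moreover have "a + b + c = 0" and "a - b + c = 0"
    using assms[of 1] assms[of "-1"] by simp_all
  ultimately show "a = 0" and "b = 0"
    by (simp_all add: algebra_simps)
qed

lemma snd_local_derivation_Gb_eq_0:
  assumes loc: "sv_local_derivation \<Delta>" and h0: "\<Delta> (Gb 0) = 0" and h1: "\<Delta> (Gb 1) = 0"
    and "M \<noteq> 0" and "M \<noteq> 1"
  shows "snd (\<Delta> (Gb M)) = 0"
proof (rule poly_mapping_eqI)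
  fix j
  define S where "S = Poly_Mapping.keys (snd (\<Delta> (Gb M)))"
  define V where "V k = Poly_Mapping.lookup (snd (\<Delta> (Gb M))) k" for k
  have S: "finite S"
    by (simp add: S_def)
  have outside: "V k = 0" if "k \<notin> S" for k
    using that by (simp add: S_def V_def in_keys_iff)
  define F where "F q \<zeta> = (\<Sum>k\<in>S. V k * of_int (q k) * \<zeta> powi k)" for q :: "int \<Rightarrow> int" and \<zeta>
  have F_combination: "T^2 * F q2 \<zeta> + T * (of_int M * \<zeta> powi M * F (q1 M) \<zeta>)
      + (of_int M * \<zeta> powi M)^2 * F (q0 M) \<zeta> = 0" if "\<zeta> \<noteq> 0" for \<zeta> T
  proof -
    have "T^2 * F q2 \<zeta> + T * (of_int M * \<zeta> powi M * F (q1 M) \<zeta>) + (of_int M * \<zeta> powi M)^2 * F (q0 M) \<zeta>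
        = (\<Sum>k\<in>S. V k * (\<zeta> powi k * annihilating_weight (of_int M) (\<zeta> powi M) T (of_int k)))"
      by (simp add: F_def annihilating_weight_of_int sum_distrib_left sum.distrib algebra_simps)
    also have "\<dots> = Sum_any (\<lambda>k. V k * (\<zeta> powi k * annihilating_weight (of_int M) (\<zeta> powi M) T (of_int k)))"
      using outside by (intro Sum_any.expand_superset[symmetric] S) auto
    also have "\<dots> = 0"
      unfolding V_def by (rule snd_local_derivation_Gb_annihilated[OF loc h0 h1 that])
    finally show ?thesis .
  qed
  have F_zero: "F q2 \<zeta> = 0 \<and> F (q1 M) \<zeta> = 0 \<and> F (q0 M) \<zeta> = 0" if "\<zeta> \<noteq> 0" for \<zeta>
  proof -
    have "of_int M * \<zeta> powi M \<noteq> 0"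
      using \<open>M \<noteq> 0\<close> that by simp
    then show ?thesis
      using quadratic_eq_0_imp_coeffs_eq_0[OF F_combination[OF that]] that by simp
  qed
  have coeff_eq_0: "V j * of_int (q j) = 0" if vanish: "\<And>\<zeta>. \<zeta> \<noteq> 0 \<Longrightarrow> F q \<zeta> = 0" for q
  proof (rule Laurent_sum_eq_0_imp_coeff_eq_0[OF S, where f = "\<lambda>k. V k * of_int (q k)"])
    show "V k * of_int (q k) = 0" if "k \<notin> S" for k
      using outside[OF that] by simp
    show "(\<Sum>k\<in>S. V k * of_int (q k) * \<zeta> powi k) = 0" if "\<zeta> \<noteq> 0" for \<zeta>
      using vanish[OF that] by (simp add: F_def)
  qed
  have "V j = 0"
  proof (rule ccontr)
    assume "V j \<noteq> 0"
    with coeff_eq_0[of q2] coeff_eq_0[of "q1 M"] coeff_eq_0[of "q0 M"] F_zero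
    have "q2 j = 0" and "q1 M j = 0" and "q0 M j = 0"
      by auto
    then show False
      using q2_q1_q0_no_common_int_root[OF \<open>M \<noteq> 1\<close>] by blast
  qed
  then show "Poly_Mapping.lookup (snd (\<Delta> (Gb M))) j = Poly_Mapping.lookup 0 j"
    by (simp add: V_def)
qed

theorem lemma3p6:
  assumes "sv_local_derivation \<Delta>"
    and "\<Delta> (Gb 0) = 0" and "\<Delta> (Gb 1) = 0"
  shows "\<forall>m::int. \<Delta> (Gb m) = 0"
proof
  fix M :: int
  show "\<Delta> (Gb M) = 0"
  proof (cases "M = 0 \<or> M = 1")
    case True
    then show ?thesis
      using assms(2,3) by auto
  next
    case False
    then show ?thesis
      using fst_local_derivation_Gb_eq_0[OF assms] snd_local_derivation_Gb_eq_0[OF assms]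
      by (simp add: prod_eq_iff)
  qed
qed

end
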